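(* Let $H_1,\dots,H_n$ be symmetric operators on a Hilbert space $\mathcal H$ with common dense domain $\mathcal D$, let $I\subset\mathbb R$ be an interval, and let $f_i,g_i\in C^1(I)$ real-valued, $i=1,\dots,n$. Suppose that $H^{(1)}(t)=\sum_i f_i(t)H_i$ and $H^{(2)}(t)=\sum_i g_i(t)H_i$, both with domain $\mathcal D$, satisfy hypotheses (i)–(iii) below, and let $U_1(t,s)$, $U_2(t,s)$ be the associated unitary propagators (whose existence is guaranteed under these hypotheses, with $U_k(t,s)\Psi$ strongly differentiable in $t$ and solving $\frac{d}{dt}\Psi(t)=-iH^{(k)}(t)\Psi(t)$ for $\Psi(s)\in\mathcal D$). Then for every $\Psi\in\mathcal D$, every $s<T$ in $I$ and every $\varepsilon>0$ there exists $\delta>0$ such that $\max_i\|f_i-g_i\|_\infty<\delta$ implies \[\|U_1(T,s)\Psi-U_2(T,s)\Psi\|<\varepsilon.\]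
   Context: Hypotheses for $H(t)=\sum_i f_i(t)H_i$ on domain $\mathcal D$: (i) $H(t)$ is self-adjoint for all $t\in I$; (ii) $f_i\in C^1(I)$; (iii) for every $i$ there is $K>0$ independent of $t$ with $\|H_i\Psi\|\le K(\|H(t)\Psi\|+\|\Psi\|)$ for all $\Psi\in\mathcal D$, $t\in I$. A unitary propagator is a family of unitaries $U(t,s)$ with $U(r,s)U(s,t)=U(r,t)$, $U(t,t)=\mathrm{Id}$, jointly strongly continuous. $\|\cdot\|_\infty$ is the sup norm on $I$. *)

theory Defs
  imports "HOL-Analysis.Analysis"
begin

text \<open>A complex Hilbert space is modelled as a Banach space type 'h (over the reals)
 together with a complex scalar multiplication sC extending the real one and a
 complex inner product ci (conjugate-linear in the first argument) inducing the norm.\<close>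

definition complex_hilbert ::
  "(complex \<Rightarrow> 'h::banach \<Rightarrow> 'h) \<Rightarrow> ('h \<Rightarrow> 'h \<Rightarrow> complex) \<Rightarrow> bool" where
  "complex_hilbert sC ci \<longleftrightarrow>
     (\<forall>r x. sC (complex_of_real r) x = r *\<^sub>R x) \<and>
     (\<forall>a x y. sC a (x + y) = sC a x + sC a y) \<and>
     (\<forall>a b x. sC (a + b) x = sC a x + sC b x) \<and>
     (\<forall>a b x. sC (a * b) x = sC a (sC b x)) \<and>
     (\<forall>x y z. ci (x + y) z = ci x z + ci y z) \<and>
     (\<forall>a x y. ci (sC a x) y = cnj a * ci x y) \<and>
     (\<forall>x y. ci y x = cnj (ci x y)) \<and>
     (\<forall>x. ci x x = complex_of_real ((norm x)\<^sup>2))"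

text \<open>Linear operator with domain D (a complex linear subspace); values outside D are irrelevant.\<close>
definition lin_op_on :: "(complex \<Rightarrow> 'h::banach \<Rightarrow> 'h) \<Rightarrow> 'h set \<Rightarrow> ('h \<Rightarrow> 'h) \<Rightarrow> bool" where
  "lin_op_on sC D A \<longleftrightarrow>
     0 \<in> D \<and> (\<forall>x\<in>D. \<forall>y\<in>D. x + y \<in> D) \<and> (\<forall>a. \<forall>x\<in>D. sC a x \<in> D) \<and>
     (\<forall>x\<in>D. \<forall>y\<in>D. A (x + y) = A x + A y) \<and> (\<forall>a. \<forall>x\<in>D. A (sC a x) = sC a (A x))"

definition symmetric_op ::
  "(complex \<Rightarrow> 'h::banach \<Rightarrow> 'h) \<Rightarrow> ('h \<Rightarrow> 'h \<Rightarrow> complex) \<Rightarrow> 'h set \<Rightarrow> ('h \<Rightarrow> 'h) \<Rightarrow> bool" where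
  "symmetric_op sC ci D A \<longleftrightarrow> lin_op_on sC D A \<and> closure D = UNIV \<and>
     (\<forall>x\<in>D. \<forall>y\<in>D. ci (A x) y = ci x (A y))"

text \<open>Self-adjoint: symmetric and A = A^*, i.e. whenever (y,z) is in the graph of the adjoint
 (ci (A x) y = ci x z for all x in D), then y is in D and z = A y.\<close>
definition self_adjoint_op ::
  "(complex \<Rightarrow> 'h::banach \<Rightarrow> 'h) \<Rightarrow> ('h \<Rightarrow> 'h \<Rightarrow> complex) \<Rightarrow> 'h set \<Rightarrow> ('h \<Rightarrow> 'h) \<Rightarrow> bool" where
  "self_adjoint_op sC ci D A \<longleftrightarrow> symmetric_op sC ci D A \<and>
     (\<forall>y z. (\<forall>x\<in>D. ci (A x) y = ci x z) \<longrightarrow> y \<in> D \<and> z = A y)"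

definition unitary_op ::
  "(complex \<Rightarrow> 'h::banach \<Rightarrow> 'h) \<Rightarrow> ('h \<Rightarrow> 'h \<Rightarrow> complex) \<Rightarrow> ('h \<Rightarrow> 'h) \<Rightarrow> bool" where
  "unitary_op sC ci U \<longleftrightarrow>
     (\<forall>x y. U (x + y) = U x + U y) \<and> (\<forall>a x. U (sC a x) = sC a (U x)) \<and>
     (\<forall>x y. ci (U x) (U y) = ci x y) \<and> surj U"

definition unitary_propagator ::
  "(complex \<Rightarrow> 'h::banach \<Rightarrow> 'h) \<Rightarrow> ('h \<Rightarrow> 'h \<Rightarrow> complex) \<Rightarrow> real set \<Rightarrow>
   (real \<Rightarrow> real \<Rightarrow> 'h \<Rightarrow> 'h) \<Rightarrow> bool" where
  "unitary_propagator sC ci I U \<longleftrightarrow>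
     (\<forall>t\<in>I. \<forall>s\<in>I. unitary_op sC ci (U t s)) \<and>
     (\<forall>r\<in>I. \<forall>s\<in>I. \<forall>t\<in>I. U r s \<circ> U s t = U r t) \<and>
     (\<forall>t\<in>I. U t t = id) \<and>
     (\<forall>\<psi>. continuous_on (I \<times> I) (\<lambda>(t, s). U t s \<psi>))"

definition propagator_of ::
  "(complex \<Rightarrow> 'h::banach \<Rightarrow> 'h) \<Rightarrow> ('h \<Rightarrow> 'h \<Rightarrow> complex) \<Rightarrow> real set \<Rightarrow> 'h set \<Rightarrow>
   (real \<Rightarrow> 'h \<Rightarrow> 'h) \<Rightarrow> (real \<Rightarrow> real \<Rightarrow> 'h \<Rightarrow> 'h) \<Rightarrow> bool" where
  "propagator_of sC ci I D H U \<longleftrightarrow> unitary_propagator sC ci I U \<and>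
     (\<forall>s\<in>I. \<forall>\<psi>\<in>D. \<forall>t\<in>I. U t s \<psi> \<in> D \<and>
        ((\<lambda>\<tau>. U \<tau> s \<psi>) has_vector_derivative (sC (- \<i>) (H t (U t s \<psi>)))) (at t within I))"

definition C1_on :: "real set \<Rightarrow> (real \<Rightarrow> real) \<Rightarrow> bool" where
  "C1_on I f \<longleftrightarrow> (\<exists>f'. (\<forall>t\<in>I. (f has_real_derivative f' t) (at t within I)) \<and> continuous_on I f')"

definition lin_comb_op :: "nat \<Rightarrow> (nat \<Rightarrow> real \<Rightarrow> real) \<Rightarrow> (nat \<Rightarrow> 'h \<Rightarrow> 'h::banach) \<Rightarrow> real \<Rightarrow> 'h \<Rightarrow> 'h" where
  "lin_comb_op n f Hs t x = (\<Sum>i\<in>{1..n}. f i t *\<^sub>R Hs i x)"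

definition hyps_i_iii ::
  "(complex \<Rightarrow> 'h::banach \<Rightarrow> 'h) \<Rightarrow> ('h \<Rightarrow> 'h \<Rightarrow> complex) \<Rightarrow> 'h set \<Rightarrow> real set \<Rightarrow>
   nat \<Rightarrow> (nat \<Rightarrow> 'h \<Rightarrow> 'h) \<Rightarrow> (nat \<Rightarrow> real \<Rightarrow> real) \<Rightarrow> bool" where
  "hyps_i_iii sC ci D I n Hs f \<longleftrightarrow>
     (\<forall>t\<in>I. self_adjoint_op sC ci D (lin_comb_op n f Hs t)) \<and>
     (\<forall>i\<in>{1..n}. C1_on I (f i)) \<and>
     (\<forall>i\<in>{1..n}. \<exists>K>0. \<forall>\<psi>\<in>D. \<forall>t\<in>I.
        norm (Hs i \<psi>) \<le> K * (norm (lin_comb_op n f Hs t \<psi>) + norm \<psi>))"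

definition sup_norm_on :: "real set \<Rightarrow> (real \<Rightarrow> real) \<Rightarrow> ereal" where
  "sup_norm_on I h = (SUP t\<in>I. ereal \<bar>h t\<bar>)"

end

theory Submission
  imports Defs
begin

text \<open>By Duhamel's formula, \<open>U\<^sub>1(T, s)\<Psi> - U\<^sub>2(T, s)\<Psi>\<close> is the integral over \<open>[s, T]\<close> of
  \<open>U\<^sub>2(T, \<sigma>) i (H\<^sub>2(\<sigma>) - H\<^sub>1(\<sigma>)) u(\<sigma>)\<close> with \<open>u(\<sigma>) = U\<^sub>1(\<sigma>, s)\<Psi>\<close>, and hypothesis (iii)
  bounds the integrand by \<open>\<delta> \<Sum>\<^sub>i K\<^sub>i (\<parallel>H\<^sub>1(\<sigma>) u(\<sigma>)\<parallel> + \<parallel>\<Psi>\<parallel>)\<close>. Everything therefore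
  reduces to a bound on the speed \<open>\<parallel>u'(\<sigma>)\<parallel> = \<parallel>H\<^sub>1(\<sigma>) u(\<sigma>)\<parallel>\<close> on \<open>[s, T]\<close>, which does not
  come for free because \<open>u\<close> is only known to be differentiable.

  Comparing \<open>u\<close> on \<open>[x, y]\<close> with its translate by \<open>h\<close>, again by Duhamel's formula, and using
  that the \<open>f\<^sub>i\<close> are Lipschitz shows: if the speed is at most \<open>M\<close> on \<open>[x, y]\<close>, then
  \<open>speed x \<le> speed y + C |x - y| (M + \<parallel>\<Psi>\<parallel>)\<close>. Such a control inequality propagates
  bounds along every segment on which the speed is bounded. The set of points near which the
  speed is unbounded is closed, and Baire's theorem, applied to the closed cover of \<open>[s, T]\<close> by
  the sets \<open>{p. \<forall>\<sigma>. \<parallel>u(\<sigma>) - u(p)\<parallel> \<le> k |\<sigma> - p|}\<close> (on which the speed is at most \<open>k\<close>),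
  shows that it is empty.\<close>

section \<open>Difference quotients and families of contractions\<close>

lemma has_vector_derivative_iff_tendsto_quotient:
  fixes f :: "real \<Rightarrow> 'a::real_normed_vector"
  shows "(f has_vector_derivative D) (at x within S) \<longleftrightarrow>
    ((\<lambda>y. (f y - f x) /\<^sub>R (y - x)) \<longlongrightarrow> D) (at x within S)"
proof -
  have "norm ((1 / norm (y - x)) *\<^sub>R (f y - (f x + (y - x) *\<^sub>R D))) = norm ((f y - f x) /\<^sub>R (y - x) - D)"
    if "y \<noteq> x" for y
  proof -
    have "(f y - f x) /\<^sub>R (y - x) - D = (1 / (y - x)) *\<^sub>R (f y - (f x + (y - x) *\<^sub>R D))"
    proof -
      have "(1 / (y - x)) *\<^sub>R ((y - x) *\<^sub>R D) = D"
        using that by simp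
      then show ?thesis
        by (simp add: scaleR_diff_right divide_inverse_commute algebra_simps)
    qed
    then show ?thesis
      by simp
  qed
  then have "((\<lambda>y. (1 / norm (y - x)) *\<^sub>R (f y - (f x + (y - x) *\<^sub>R D))) \<longlongrightarrow> 0) (at x within S)
      \<longleftrightarrow> ((\<lambda>y. (f y - f x) /\<^sub>R (y - x) - D) \<longlongrightarrow> 0) (at x within S)"
    by (subst (1 2) tendsto_norm_zero_iff[symmetric]) (intro Lim_cong_within, auto)
  then show ?thesis
    unfolding has_vector_derivative_def has_derivative_within
    by (simp add: bounded_linear_scaleR_left Lim_null[symmetric])
qed

lemma tendsto_contractions_apply:
  fixes V :: "'c::topological_space \<Rightarrow> 'a::real_normed_vector \<Rightarrow> 'b::real_normed_vector"
  assumes lin: "\<And>\<sigma>'. \<sigma>' \<in> S \<Longrightarrow> linear (V \<sigma>')"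
    and contr: "\<And>\<sigma>' z. \<sigma>' \<in> S \<Longrightarrow> norm (V \<sigma>' z) \<le> norm z"
    and V: "((\<lambda>\<sigma>'. V \<sigma>' z) \<longlongrightarrow> V \<sigma> z) (at \<sigma> within S)"
    and y: "(y \<longlongrightarrow> z) (at \<sigma> within S)"
  shows "((\<lambda>\<sigma>'. V \<sigma>' (y \<sigma>')) \<longlongrightarrow> V \<sigma> z) (at \<sigma> within S)"
proof -
  have "eventually (\<lambda>\<sigma>'. norm (V \<sigma>' (y \<sigma>') - V \<sigma>' z) \<le> norm (y \<sigma>' - z)) (at \<sigma> within S)"
    unfolding eventually_at_filter
    by (auto intro!: always_eventually simp: contr linear_diff[OF lin, symmetric])
  moreover have "((\<lambda>\<sigma>'. norm (y \<sigma>' - z)) \<longlongrightarrow> 0) (at \<sigma> within S)"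
    using y by (simp add: tendsto_norm_zero_iff LIM_zero_iff)
  ultimately have "((\<lambda>\<sigma>'. V \<sigma>' (y \<sigma>') - V \<sigma>' z) \<longlongrightarrow> 0) (at \<sigma> within S)"
    by (rule Lim_null_comparison)
  from tendsto_add[OF this V] show ?thesis
    by simp
qed

lemma has_vector_derivative_contractions_apply:
  fixes V :: "real \<Rightarrow> 'a::real_normed_vector \<Rightarrow> 'b::real_normed_vector"
  assumes lin: "\<And>\<sigma>'. \<sigma>' \<in> S \<Longrightarrow> linear (V \<sigma>')"
    and contr: "\<And>\<sigma>' z. \<sigma>' \<in> S \<Longrightarrow> norm (V \<sigma>' z) \<le> norm z"
    and V: "\<And>z. ((\<lambda>\<sigma>'. V \<sigma>' z) \<longlongrightarrow> V \<sigma> z) (at \<sigma> within S)"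
    and y: "(y has_vector_derivative y') (at \<sigma> within S)"
    and Vy: "((\<lambda>\<sigma>'. V \<sigma>' (y \<sigma>)) has_vector_derivative d) (at \<sigma> within S)"
  shows "((\<lambda>\<sigma>'. V \<sigma>' (y \<sigma>')) has_vector_derivative V \<sigma> y' + d) (at \<sigma> within S)"
proof -
  have "((\<lambda>\<sigma>'. V \<sigma>' ((y \<sigma>' - y \<sigma>) /\<^sub>R (\<sigma>' - \<sigma>))) \<longlongrightarrow> V \<sigma> y') (at \<sigma> within S)"
    using y by (intro tendsto_contractions_apply[OF lin contr V]) (simp_all add: has_vector_derivative_iff_tendsto_quotient)
  moreover have "((\<lambda>\<sigma>'. (V \<sigma>' (y \<sigma>) - V \<sigma> (y \<sigma>)) /\<^sub>R (\<sigma>' - \<sigma>)) \<longlongrightarrow> d) (at \<sigma> within S)"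
    using Vy by (simp add: has_vector_derivative_iff_tendsto_quotient)
  ultimately have "((\<lambda>\<sigma>'. V \<sigma>' ((y \<sigma>' - y \<sigma>) /\<^sub>R (\<sigma>' - \<sigma>)) + (V \<sigma>' (y \<sigma>) - V \<sigma> (y \<sigma>)) /\<^sub>R (\<sigma>' - \<sigma>))
     \<longlongrightarrow> V \<sigma> y' + d) (at \<sigma> within S)"
    by (rule tendsto_add)
  moreover have "eventually (\<lambda>\<sigma>'. V \<sigma>' ((y \<sigma>' - y \<sigma>) /\<^sub>R (\<sigma>' - \<sigma>)) + (V \<sigma>' (y \<sigma>) - V \<sigma> (y \<sigma>)) /\<^sub>R (\<sigma>' - \<sigma>)
      = (V \<sigma>' (y \<sigma>') - V \<sigma> (y \<sigma>)) /\<^sub>R (\<sigma>' - \<sigma>)) (at \<sigma> within S)"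
    unfolding eventually_at_filter
    by (auto intro!: always_eventually simp: linear_scale[OF lin] linear_diff[OF lin] scaleR_diff_right)
  ultimately show ?thesis
    by (simp add: has_vector_derivative_iff_tendsto_quotient tendsto_cong)
qed

lemma contractions_apply_increment_bound:
  fixes V :: "real \<Rightarrow> 'a::real_normed_vector \<Rightarrow> 'b::real_normed_vector"
  assumes "lo \<le> hi"
    and lin: "\<And>\<sigma>. \<sigma> \<in> {lo..hi} \<Longrightarrow> linear (V \<sigma>)"
    and contr: "\<And>\<sigma> z. \<sigma> \<in> {lo..hi} \<Longrightarrow> norm (V \<sigma> z) \<le> norm z"
    and V: "\<And>\<sigma> z. \<sigma> \<in> {lo..hi} \<Longrightarrow> ((\<lambda>\<sigma>'. V \<sigma>' z) \<longlongrightarrow> V \<sigma> z) (at \<sigma> within {lo..hi})"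
    and y: "\<And>\<sigma>. \<sigma> \<in> {lo..hi} \<Longrightarrow> (y has_vector_derivative y' \<sigma>) (at \<sigma> within {lo..hi})"
    and Vy: "\<And>\<sigma>. \<sigma> \<in> {lo..hi} \<Longrightarrow> ((\<lambda>\<sigma>'. V \<sigma>' (y \<sigma>)) has_vector_derivative d \<sigma>) (at \<sigma> within {lo..hi})"
    and bound: "\<And>\<sigma>. \<sigma> \<in> {lo..hi} \<Longrightarrow> norm (V \<sigma> (y' \<sigma>) + d \<sigma>) \<le> B"
  shows "norm (V hi (y hi) - V lo (y lo)) \<le> B * (hi - lo)"
proof -
  have "0 \<le> B"
    using bound[of lo] \<open>lo \<le> hi\<close> by (meson atLeastAtMost_iff norm_ge_zero order_refl order_trans)
  have "((\<lambda>\<sigma>. V \<sigma> (y \<sigma>)) has_derivative (\<lambda>t. t *\<^sub>R (V \<sigma> (y' \<sigma>) + d \<sigma>))) (at \<sigma> within {lo..hi})"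
    if "\<sigma> \<in> {lo..hi}" for \<sigma>
    using has_vector_derivative_contractions_apply[OF lin contr V y Vy] that
    unfolding has_vector_derivative_def by blast
  moreover have "onorm (\<lambda>t. t *\<^sub>R (V \<sigma> (y' \<sigma>) + d \<sigma>)) \<le> B" if "\<sigma> \<in> {lo..hi}" for \<sigma>
    using bound[OF that] \<open>0 \<le> B\<close> by (intro onorm_bound) (auto simp: mult.commute[of B] mult_left_mono)
  ultimately have "B-lipschitz_on {lo..hi} (\<lambda>\<sigma>. V \<sigma> (y \<sigma>))"
    using \<open>0 \<le> B\<close> by (intro bounded_derivative_imp_lipschitz) auto
  then have "dist (V hi (y hi)) (V lo (y lo)) \<le> B * dist hi lo"
    using \<open>lo \<le> hi\<close> by (intro lipschitz_onD) auto
  then show ?thesis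
    using \<open>lo \<le> hi\<close> by (simp add: dist_norm)
qed

section \<open>A boundedness criterion from Baire's theorem\<close>

lemma Baire_closed_cover:
  fixes B :: "'a::{real_normed_vector,heine_borel} set" and E :: "nat \<Rightarrow> 'a set"
  assumes "closed B" "B \<noteq> {}" "B \<subseteq> (\<Union>k. E k)" "\<And>k. closed (E k)"
  obtains k p e where "p \<in> B" "e > 0" "B \<inter> ball p e \<subseteq> E k"
proof -
  have "\<exists>k. \<not> B \<subseteq> closure (B - E k)"
  proof (rule ccontr)
    assume "\<nexists>k. \<not> B \<subseteq> closure (B - E k)"
    then have "B \<subseteq> closure (\<Inter>(range (\<lambda>k. B - E k)))"
      using assms(4) by (intro Baire[OF assms(1)]) (auto simp: Diff_eq intro!: openin_open_Int open_Compl)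
    moreover have "\<Inter>(range (\<lambda>k. B - E k)) = {}"
      using assms(3) by blast
    ultimately show False
      using assms(2) by (metis closure_empty subset_empty)
  qed
  then obtain k p where "p \<in> B" "p \<notin> closure (B - E k)"
    by blast
  then obtain e where "e > 0" "\<forall>q\<in>B - E k. \<not> dist q p < e"
    unfolding closure_approachable by blast
  then have "B \<inter> ball p e \<subseteq> E k"
    by (auto simp: dist_commute)
  with \<open>p \<in> B\<close> \<open>e > 0\<close> show thesis
    using that by blast
qed

lemma closed_segment_nearest_point:
  fixes B :: "real set"
  assumes "closed B" "p \<in> B"
  obtains q where "q \<in> B" "q \<in> closed_segment p t" "\<And>r. r \<in> closed_segment q t \<Longrightarrow> r \<noteq> q \<Longrightarrow> r \<notin> B"
proof -
  have "closed (B \<inter> closed_segment p t)" "B \<inter> closed_segment p t \<noteq> {}"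
    using assms by (auto intro: closed_Int)
  from distance_attains_inf[OF this] obtain q where q: "q \<in> B \<inter> closed_segment p t"
    and nearest: "\<And>r. r \<in> B \<inter> closed_segment p t \<Longrightarrow> dist t q \<le> dist t r"
    by blast
  have "r \<notin> B" if "r \<in> closed_segment q t" "r \<noteq> q" for r
  proof
    assume "r \<in> B"
    moreover have "r \<in> closed_segment p t"
      using that(1) q subset_closed_segment by blast
    ultimately have "dist t q \<le> dist t r"
      by (intro nearest) blast
    moreover have "dist t r < dist t q"
      using that by (auto simp: closed_segment_eq_real_ivl dist_real_def split: if_splits)
    ultimately show False
      by simp
  qed
  with q show thesis
    using that by blast
qed

locale increment_controlled =
  fixes m :: "real \<Rightarrow> real" and a b C c \<rho> :: real
  assumes C_nonneg: "0 \<le> C" and c_nonneg: "0 \<le> c" and radius_pos: "0 < \<rho>"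
    and nonneg: "\<And>t. t \<in> {a..b} \<Longrightarrow> 0 \<le> m t"
    and increment: "\<And>x y M. x \<in> {a..b} \<Longrightarrow> y \<in> {a..b} \<Longrightarrow> \<bar>x - y\<bar> \<le> \<rho> \<Longrightarrow>
       (\<And>t. t \<in> closed_segment x y \<Longrightarrow> m t \<le> M) \<Longrightarrow> m x \<le> m y + C * \<bar>x - y\<bar> * (M + c)"
begin

definition step :: real where "step = min \<rho> (1 / (2 * C + 1))"

lemma step_pos: "0 < step"
  unfolding step_def using radius_pos C_nonneg by auto

lemma C_step: "C * step \<le> 1 / 2"
proof -
  have "C * step \<le> C * (1 / (2 * C + 1))"
    unfolding step_def using C_nonneg by (intro mult_left_mono) auto
  also have "\<dots> \<le> 1 / 2"
    using C_nonneg by (simp add: field_simps)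
  finally show ?thesis .
qed

lemma segment_in_domain: "x \<in> {a..b} \<Longrightarrow> y \<in> {a..b} \<Longrightarrow> closed_segment x y \<subseteq> {a..b}"
  by (simp add: closed_segment_subset)

text \<open>On a segment of length at most \<open>step\<close> the control inequality, applied with \<open>M\<close> the
  supremum \<open>S\<close> of \<open>m\<close>, gives \<open>S \<le> m y + (S + c) / 2\<close>.\<close>
lemma le_double_if_bounded_short_segment:
  assumes x: "x \<in> {a..b}" and y: "y \<in> {a..b}" and short: "\<bar>x - y\<bar> \<le> step"
    and bdd: "bdd_above (m ` closed_segment x y)"
  shows "m x \<le> 2 * m y + c"
proof -
  define S where "S = (SUP t\<in>closed_segment x y. m t)"
  have le_S: "m r \<le> S" if "r \<in> closed_segment x y" for r
    unfolding S_def using bdd that by (rule cSUP_upper2) simp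
  have "0 \<le> S"
    using le_S[of y] nonneg[OF y] by simp
  have "m r \<le> m y + (S + c) / 2" if r: "r \<in> closed_segment x y" for r
  proof -
    have sub: "closed_segment r y \<subseteq> closed_segment x y"
      using r by (simp add: subset_closed_segment)
    have ry: "\<bar>r - y\<bar> \<le> step"
      using r short by (auto simp: closed_segment_eq_real_ivl split: if_splits)
    then have "\<bar>r - y\<bar> \<le> \<rho>"
      unfolding step_def by simp
    then have "m r \<le> m y + C * \<bar>r - y\<bar> * (S + c)"
      using increment[of r y S] segment_in_domain[OF x y] r y sub le_S by blast
    also have "C * \<bar>r - y\<bar> \<le> 1 / 2"
      using C_step mult_left_mono[OF ry C_nonneg] by linarith
    then have "C * \<bar>r - y\<bar> * (S + c) \<le> (S + c) / 2"
      using \<open>0 \<le> S\<close> c_nonneg mult_right_mono[of _ "1/2" "S + c"] by simp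
    finally show ?thesis by simp
  qed
  then have "S \<le> m y + (S + c) / 2"
    unfolding S_def by (intro cSUP_least) auto
  moreover have "m x \<le> S"
    by (rule le_S) simp
  ultimately show ?thesis
    by (simp add: field_simps)
qed

lemma le_pow2_if_bounded_segment:
  assumes "x \<in> {a..b}" "y \<in> {a..b}" "\<bar>x - y\<bar> \<le> real N * step"
    and "bdd_above (m ` closed_segment x y)"
  shows "m x \<le> 2 ^ N * (m y + c)"
  using assms
proof (induction N arbitrary: y)
  case 0
  then show ?case
    using step_pos c_nonneg by simp
next
  case (Suc N)
  show ?case
  proof (cases "\<bar>x - y\<bar> \<le> step")
    case True
    have "m x \<le> 2 * m y + c"
      using le_double_if_bounded_short_segment Suc.prems True by blast
    also have "\<dots> \<le> 2 * (m y + c)"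
      using c_nonneg by simp
    also have "\<dots> \<le> 2 ^ Suc N * (m y + c)"
      using nonneg[OF Suc.prems(2)] c_nonneg one_le_power[of "2::real" N] by (intro mult_right_mono) auto
    finally show ?thesis .
  next
    case False
    define z where "z = y + sgn (x - y) * step"
    have zy: "\<bar>z - y\<bar> = step" and xz: "\<bar>x - z\<bar> \<le> real N * step"
      and z_seg: "z \<in> closed_segment x y"
      using False Suc.prems(3) step_pos
      by (auto simp: z_def sgn_if closed_segment_eq_real_ivl algebra_simps)
    have z: "z \<in> {a..b}"
      using z_seg segment_in_domain Suc.prems(1,2) by blast
    have bdd_xz: "bdd_above (m ` closed_segment x z)" and bdd_zy: "bdd_above (m ` closed_segment z y)"
      using z_seg Suc.prems(4) by (meson bdd_above_mono image_mono subset_closed_segment ends_in_segment)+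
    have "m x \<le> 2 ^ N * (m z + c)"
      using Suc.IH[OF Suc.prems(1) z xz bdd_xz] .
    also have "\<dots> \<le> 2 ^ N * (2 * m y + c + c)"
      using le_double_if_bounded_short_segment[OF z Suc.prems(2) _ bdd_zy] zy by simp
    also have "\<dots> = 2 ^ Suc N * (m y + c)"
      by (simp add: algebra_simps)
    finally show ?thesis .
  qed
qed

definition growth :: real where "growth = 2 ^ nat \<lceil>(b - a) / step\<rceil>"

lemma growth_ge_1: "1 \<le> growth"
  unfolding growth_def by simp

lemma le_growth_if_bounded_segment:
  assumes "x \<in> {a..b}" "y \<in> {a..b}" "bdd_above (m ` closed_segment x y)"
  shows "m x \<le> growth * (m y + c)"
proof -
  have "\<bar>x - y\<bar> \<le> ((b - a) / step) * step"
    using assms step_pos by auto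
  also have "\<dots> \<le> real (nat \<lceil>(b - a) / step\<rceil>) * step"
    using step_pos by (intro mult_right_mono) (auto simp: real_nat_ceiling_ge)
  finally show ?thesis
    unfolding growth_def using le_pow2_if_bounded_segment assms by blast
qed

definition locally_bounded_at :: "real \<Rightarrow> bool" where
  "locally_bounded_at p \<longleftrightarrow> (\<exists>e>0. bdd_above (m ` ({a..b} \<inter> ball p e)))"

lemma open_locally_bounded: "open {p. locally_bounded_at p}"
  unfolding open_contains_ball
proof safe
  fix p assume "locally_bounded_at p"
  then obtain e where "e > 0" and bdd: "bdd_above (m ` ({a..b} \<inter> ball p e))"
    unfolding locally_bounded_at_def by blast
  have "locally_bounded_at q" if "q \<in> ball p (e / 2)" for q
    unfolding locally_bounded_at_def
  proof (intro exI conjI)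
    show "bdd_above (m ` ({a..b} \<inter> ball q (e / 2)))"
      using that by (intro bdd_above_mono[OF bdd] image_mono) (auto simp: dist_commute dist_triangle_half_r)
  qed (use \<open>e > 0\<close> in simp)
  then show "\<exists>e>0. ball p e \<subseteq> {p. locally_bounded_at p}"
    using \<open>e > 0\<close> by (intro exI[of _ "e / 2"]) auto
qed

lemma bdd_above_if_locally_bounded:
  assumes "compact K" "K \<subseteq> {a..b}" "\<And>p. p \<in> K \<Longrightarrow> locally_bounded_at p"
  shows "bdd_above (m ` K)"
proof -
  have "\<forall>p\<in>K. \<exists>e>0. bdd_above (m ` ({a..b} \<inter> ball p e))"
    using assms(3) by (auto simp: locally_bounded_at_def)
  then obtain e where e: "\<forall>p\<in>K. e p > 0 \<and> bdd_above (m ` ({a..b} \<inter> ball p (e p)))"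
    by (rule bchoice_iff[THEN iffD1, elim_format]) blast
  then have "K \<subseteq> (\<Union>p\<in>K. ball p (e p))"
    by force
  then obtain F where "F \<subseteq> K" "finite F" "K \<subseteq> (\<Union>p\<in>F. ball p (e p))"
    by (rule compactE_image[OF assms(1), rotated]) auto
  then have "m ` K \<subseteq> (\<Union>p\<in>F. m ` ({a..b} \<inter> ball p (e p)))"
    using assms(2) by blast
  moreover have "bdd_above (\<Union>p\<in>F. m ` ({a..b} \<inter> ball p (e p)))"
    using \<open>finite F\<close> \<open>F \<subseteq> K\<close> e by auto
  ultimately show ?thesis
    by (meson bdd_above_mono)
qed

lemma le_growth_beyond_last_unbounded_point:
  assumes q: "q \<in> {a..b}" and t: "t \<in> {a..b}"
    and beyond: "\<And>r. r \<in> closed_segment q t \<Longrightarrow> r \<noteq> q \<Longrightarrow> locally_bounded_at r"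
  shows "m t \<le> growth * (m q + c)"
proof -
  have "m r \<le> max (m q) (growth * (m t + c))" if r: "r \<in> closed_segment q t" for r
  proof (cases "r = q")
    case False
    have "closed_segment r t \<subseteq> closed_segment q t - {q}"
      using r False by (auto simp: closed_segment_eq_real_ivl split: if_splits)
    moreover have "closed_segment q t \<subseteq> {a..b}"
      using segment_in_domain[OF q t] .
    ultimately have "bdd_above (m ` closed_segment r t)"
      using beyond by (intro bdd_above_if_locally_bounded) auto
    then have "m r \<le> growth * (m t + c)"
      using r segment_in_domain[OF q t] t by (intro le_growth_if_bounded_segment) auto
    then show ?thesis
      by simp
  qed simp
  then have "bdd_above (m ` closed_segment t q)"
    by (intro bdd_aboveI2) (auto simp: closed_segment_commute)
  then show ?thesis
    using le_growth_if_bounded_segment[OF t q] by blast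
qed

text \<open>If \<open>m\<close> is bounded at the points near \<open>p\<close> where it is not locally bounded, it is locally
  bounded at \<open>p\<close>: from any other point \<open>t\<close> near \<open>p\<close>, walk towards \<open>p\<close> up to the first such
  point \<open>q\<close>.\<close>
lemma locally_bounded_at_if_bounded_at_unbounded_points:
  assumes p: "p \<in> {a..b}" and "e > 0"
    and bound: "\<And>q. q \<in> {a..b} \<inter> ball p e \<Longrightarrow> \<not> locally_bounded_at q \<Longrightarrow> m q \<le> M"
  shows "locally_bounded_at p"
proof (rule ccontr)
  assume "\<not> locally_bounded_at p"
  define B where "B = {a..b} - {p. locally_bounded_at p}"
  have "closed B"
    unfolding B_def by (intro closed_Diff open_locally_bounded) simp
  have "p \<in> B"
    using p \<open>\<not> locally_bounded_at p\<close> unfolding B_def by blast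
  have le_M: "m q \<le> M" and growth_M: "M \<le> growth * (M + c)" if "q \<in> B \<inter> ball p e" for q
  proof -
    show "m q \<le> M"
      using bound that unfolding B_def by blast
    then have "0 \<le> M"
      using nonneg that unfolding B_def by (meson DiffD1 IntD1 order_trans)
    then show "M \<le> growth * (M + c)"
      using growth_ge_1 c_nonneg mult_right_mono[of 1 growth "M + c"] by simp
  qed
  have "m t \<le> growth * (M + c)" if t: "t \<in> {a..b} \<inter> ball p e" for t
  proof (cases "t \<in> B")
    case True
    then show ?thesis
      using le_M growth_M t by fastforce
  next
    case False
    obtain q where "q \<in> B" "q \<in> closed_segment p t"
      and beyond: "\<And>r. r \<in> closed_segment q t \<Longrightarrow> r \<noteq> q \<Longrightarrow> r \<notin> B"
      using closed_segment_nearest_point[OF \<open>closed B\<close> \<open>p \<in> B\<close>] by blast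
    have "q \<in> ball p e"
      using \<open>q \<in> closed_segment p t\<close> t \<open>e > 0\<close> closed_segment_subset[of p "ball p e" t] by auto
    have q: "q \<in> {a..b}"
      using \<open>q \<in> B\<close> unfolding B_def by blast
    have "closed_segment q t \<subseteq> {a..b}"
      using segment_in_domain q t by blast
    then have "m t \<le> growth * (m q + c)"
      using t beyond unfolding B_def by (intro le_growth_beyond_last_unbounded_point[OF q]) auto
    also have "\<dots> \<le> growth * (M + c)"
      using le_M \<open>q \<in> B\<close> \<open>q \<in> ball p e\<close> growth_ge_1 by simp
    finally show ?thesis .
  qed
  then have "locally_bounded_at p"
    unfolding locally_bounded_at_def using \<open>e > 0\<close> by (intro exI[of _ e] conjI bdd_aboveI2) auto
  with \<open>\<not> locally_bounded_at p\<close> show False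
    by blast
qed

lemma bdd_above_if_closed_cover:
  fixes E :: "nat \<Rightarrow> real set"
  assumes cover: "{a..b} \<subseteq> (\<Union>k. E k)" and closed: "\<And>k. closed (E k)"
    and bound: "\<And>k p. p \<in> E k \<Longrightarrow> p \<in> {a..b} \<Longrightarrow> m p \<le> real k"
  shows "bdd_above (m ` {a..b})"
proof -
  define B where "B = {a..b} - {p. locally_bounded_at p}"
  have "B = {}"
  proof (rule ccontr)
    have "closed B"
      unfolding B_def by (intro closed_Diff open_locally_bounded) simp
    moreover assume "B \<noteq> {}"
    moreover have "B \<subseteq> (\<Union>k. E k)"
      using cover unfolding B_def by blast
    ultimately obtain k p e where "p \<in> B" and "e > 0" and near: "B \<inter> ball p e \<subseteq> E k"
      using closed by (rule Baire_closed_cover)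
    then have "locally_bounded_at p"
      using bound unfolding B_def by (intro locally_bounded_at_if_bounded_at_unbounded_points[of p e "real k"]) auto
    with \<open>p \<in> B\<close> show False
      unfolding B_def by blast
  qed
  then show ?thesis
    unfolding B_def by (intro bdd_above_if_locally_bounded) auto
qed

end

section \<open>Unitary propagators\<close>

lemma propagator_unitary:
  "propagator_of sC ci I D H U \<Longrightarrow> t \<in> I \<Longrightarrow> r \<in> I \<Longrightarrow> unitary_op sC ci (U t r)"
  unfolding propagator_of_def unitary_propagator_def by blast

lemma propagator_comp:
  "propagator_of sC ci I D H U \<Longrightarrow> r \<in> I \<Longrightarrow> \<sigma> \<in> I \<Longrightarrow> t \<in> I \<Longrightarrow> U r \<sigma> (U \<sigma> t x) = U r t x"
  unfolding propagator_of_def unitary_propagator_def by (metis comp_apply)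

lemma propagator_id: "propagator_of sC ci I D H U \<Longrightarrow> t \<in> I \<Longrightarrow> U t t x = x"
  unfolding propagator_of_def unitary_propagator_def by simp

lemma propagator_in_domain:
  "propagator_of sC ci I D H U \<Longrightarrow> r \<in> I \<Longrightarrow> z \<in> D \<Longrightarrow> t \<in> I \<Longrightarrow> U t r z \<in> D"
  unfolding propagator_of_def by blast

lemma propagator_has_vector_derivative:
  "propagator_of sC ci I D H U \<Longrightarrow> r \<in> I \<Longrightarrow> z \<in> D \<Longrightarrow> t \<in> I \<Longrightarrow>
   ((\<lambda>\<tau>. U \<tau> r z) has_vector_derivative sC (- \<i>) (H t (U t r z))) (at t within I)"
  unfolding propagator_of_def by blast

lemma continuous_on_propagator_left:
  assumes "propagator_of sC ci I D H U" "r \<in> I"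
  shows "continuous_on I (\<lambda>\<sigma>. U \<sigma> r z)"
proof -
  have "continuous_on (I \<times> I) (\<lambda>(t, s). U t s z)"
    using assms(1) unfolding propagator_of_def unitary_propagator_def by blast
  then have "continuous_on I (\<lambda>\<sigma>. (\<lambda>(t, s). U t s z) (\<sigma>, r))"
    by (rule continuous_on_compose2) (use assms(2) in \<open>auto intro!: continuous_intros\<close>)
  then show ?thesis
    by simp
qed

lemma continuous_on_propagator_right:
  assumes "propagator_of sC ci I D H U" "t \<in> I"
  shows "continuous_on I (\<lambda>\<sigma>. U t \<sigma> z)"
proof -
  have "continuous_on (I \<times> I) (\<lambda>(t, s). U t s z)"
    using assms(1) unfolding propagator_of_def unitary_propagator_def by blast
  then have "continuous_on I (\<lambda>\<sigma>. (\<lambda>(t, s). U t s z) (t, \<sigma>))"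
    by (rule continuous_on_compose2) (use assms(2) in \<open>auto intro!: continuous_intros\<close>)
  then show ?thesis
    by simp
qed

context
  fixes sC :: "complex \<Rightarrow> 'h::banach \<Rightarrow> 'h" and ci :: "'h \<Rightarrow> 'h \<Rightarrow> complex"
  assumes hilbert: "complex_hilbert sC ci"
begin

lemma scaleC_of_real: "sC (complex_of_real r) x = r *\<^sub>R x"
  using hilbert unfolding complex_hilbert_def by blast

lemma scaleC_add_right: "sC a (x + y) = sC a x + sC a y"
  using hilbert unfolding complex_hilbert_def by blast

lemma scaleC_scaleC: "sC (a * b) x = sC a (sC b x)"
  using hilbert unfolding complex_hilbert_def by blast

lemma scaleC_diff_right: "sC a (x - y) = sC a x - sC a y"
  by (metis add_diff_cancel diff_add_cancel scaleC_add_right)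

lemma scaleC_minus_ii: "sC (- \<i>) x = - sC \<i> x"
proof -
  have "sC (- \<i>) x = sC (complex_of_real (-1) * \<i>) x"
    by simp
  also have "\<dots> = - sC \<i> x"
    by (simp only: scaleC_scaleC scaleC_of_real) simp
  finally show ?thesis .
qed

lemma inner_self_eq_norm_square: "ci x x = complex_of_real ((norm x)\<^sup>2)"
  using hilbert unfolding complex_hilbert_def by blast

lemma norm_eq_if_inner_eq:
  assumes "ci x x = ci y y" shows "norm x = norm y"
proof -
  from assms have "(norm x)\<^sup>2 = (norm y)\<^sup>2"
    unfolding inner_self_eq_norm_square of_real_eq_iff .
  then show ?thesis
    by (simp add: power2_eq_iff_nonneg)
qed

lemma norm_scaleC_unimodular:
  assumes "cmod a = 1" shows "norm (sC a x) = norm x"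
proof (rule norm_eq_if_inner_eq)
  have inner_scale: "ci (sC b y) z = cnj b * ci y z" and inner_commute: "ci y z = cnj (ci z y)" for b y z
    using hilbert unfolding complex_hilbert_def by blast+
  have "cnj a * a = 1"
    using assms by (metis complex_norm_square mult.commute of_real_1 power_one)
  have "ci (sC a x) (sC a x) = cnj a * cnj (cnj a * ci x x)"
    by (simp add: inner_scale inner_commute[of x "sC a x"])
  also have "\<dots> = (cnj a * a) * ci x x"
    by (simp add: inner_self_eq_norm_square)
  finally show "ci (sC a x) (sC a x) = ci x x"
    using \<open>cnj a * a = 1\<close> by simp
qed

lemma norm_unitary: "unitary_op sC ci U \<Longrightarrow> norm (U x) = norm x"
  unfolding unitary_op_def by (intro norm_eq_if_inner_eq) blast

lemma linear_unitary: "unitary_op sC ci U \<Longrightarrow> linear U"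
  unfolding unitary_op_def by (intro linearI) (auto simp flip: scaleC_of_real)

lemma norm_unitary_ii_diff:
  assumes "unitary_op sC ci U"
  shows "norm (U (sC (- \<i>) x) + U (sC \<i> y)) = norm (y - x)"
proof -
  have "U (sC (- \<i>) x) + U (sC \<i> y) = U (sC \<i> (y - x))"
    using linear_diff[OF linear_unitary[OF assms]] linear_neg[OF linear_unitary[OF assms]]
    by (simp add: scaleC_minus_ii scaleC_diff_right)
  then show ?thesis
    by (simp add: norm_unitary[OF assms] norm_scaleC_unimodular)
qed

text \<open>The derivative of \<open>U(t, \<sigma>) z\<close> in the initial time \<open>\<sigma>\<close> is \<open>U(t, \<sigma>) (i H(\<sigma>) z)\<close>, because
  \<open>U(t, \<sigma>') z - U(t, \<sigma>) z = U(t, \<sigma>') (z - U(\<sigma>', \<sigma>) z)\<close>.\<close>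
lemma propagator_has_vector_derivative_initial:
  assumes P: "propagator_of sC ci I D H U" and t: "t \<in> I" and \<sigma>: "\<sigma> \<in> I" and z: "z \<in> D"
  shows "((\<lambda>\<sigma>'. U t \<sigma>' z) has_vector_derivative U t \<sigma> (sC \<i> (H \<sigma> z))) (at \<sigma> within I)"
proof -
  have lin: "linear (U t \<sigma>')" and contr: "norm (U t \<sigma>' w) \<le> norm w" if "\<sigma>' \<in> I" for \<sigma>' w
    using propagator_unitary[OF P t that] by (simp_all add: linear_unitary norm_unitary)
  have U_cont: "((\<lambda>\<sigma>'. U t \<sigma>' w) \<longlongrightarrow> U t \<sigma> w) (at \<sigma> within I)" for w
    using continuous_on_propagator_right[OF P t] \<sigma> unfolding continuous_on_def by blast
  have quotient: "((\<lambda>\<sigma>'. - ((U \<sigma>' \<sigma> z - U \<sigma> \<sigma> z) /\<^sub>R (\<sigma>' - \<sigma>))) \<longlongrightarrow> sC \<i> (H \<sigma> z)) (at \<sigma> within I)"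
    using tendsto_minus[OF propagator_has_vector_derivative[OF P \<sigma> z \<sigma>, unfolded has_vector_derivative_iff_tendsto_quotient]]
    by (simp add: scaleC_minus_ii propagator_id[OF P \<sigma>])
  have "((\<lambda>\<sigma>'. U t \<sigma>' (- ((U \<sigma>' \<sigma> z - U \<sigma> \<sigma> z) /\<^sub>R (\<sigma>' - \<sigma>)))) \<longlongrightarrow> U t \<sigma> (sC \<i> (H \<sigma> z)))
      (at \<sigma> within I)"
    by (rule tendsto_contractions_apply[where V = "U t", OF lin contr U_cont quotient])
  moreover have "eventually (\<lambda>\<sigma>'. U t \<sigma>' (- ((U \<sigma>' \<sigma> z - U \<sigma> \<sigma> z) /\<^sub>R (\<sigma>' - \<sigma>)))
      = (U t \<sigma>' z - U t \<sigma> z) /\<^sub>R (\<sigma>' - \<sigma>)) (at \<sigma> within I)"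
    unfolding eventually_at_filter
  proof (intro always_eventually allI impI)
    fix \<sigma>' assume "\<sigma>' \<in> I"
    have "U t \<sigma> z = U t \<sigma>' (U \<sigma>' \<sigma> z)"
      using propagator_comp[OF P t \<open>\<sigma>' \<in> I\<close> \<sigma>] by simp
    moreover have "- ((U \<sigma>' \<sigma> z - U \<sigma> \<sigma> z) /\<^sub>R (\<sigma>' - \<sigma>)) = (1 / (\<sigma>' - \<sigma>)) *\<^sub>R (z - U \<sigma>' \<sigma> z)"
      by (simp add: propagator_id[OF P \<sigma>] scaleR_diff_right divide_inverse)
    ultimately show "U t \<sigma>' (- ((U \<sigma>' \<sigma> z - U \<sigma> \<sigma> z) /\<^sub>R (\<sigma>' - \<sigma>))) = (U t \<sigma>' z - U t \<sigma> z) /\<^sub>R (\<sigma>' - \<sigma>)"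
      using lin[OF \<open>\<sigma>' \<in> I\<close>] by (simp add: linear_scale linear_diff divide_inverse propagator_id[OF P \<sigma>])
  qed
  ultimately show ?thesis
    unfolding has_vector_derivative_iff_tendsto_quotient by (simp add: tendsto_cong)
qed

text \<open>Differential form of Duhamel's formula: if \<open>w\<close> solves \<open>w' = -i G(\<sigma>) w\<close>, the derivative of
  \<open>U(t, \<sigma> + h) w(\<sigma>)\<close> is \<open>U(t, \<sigma> + h) (i (H(\<sigma> + h) - G(\<sigma>)) w(\<sigma>))\<close>.\<close>
lemma propagator_duhamel_bound:
  assumes P: "propagator_of sC ci I D H U" and t: "t \<in> I" and "lo \<le> hi"
    and shift: "\<And>\<sigma>. \<sigma> \<in> {lo..hi} \<Longrightarrow> \<sigma> + h \<in> I"
    and w: "\<And>\<sigma>. \<sigma> \<in> {lo..hi} \<Longrightarrow> (w has_vector_derivative sC (- \<i>) (G \<sigma> (w \<sigma>))) (at \<sigma> within {lo..hi})"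
    and w_in_domain: "\<And>\<sigma>. \<sigma> \<in> {lo..hi} \<Longrightarrow> w \<sigma> \<in> D"
    and bound: "\<And>\<sigma>. \<sigma> \<in> {lo..hi} \<Longrightarrow> norm (H (\<sigma> + h) (w \<sigma>) - G \<sigma> (w \<sigma>)) \<le> B"
  shows "norm (U t (hi + h) (w hi) - U t (lo + h) (w lo)) \<le> B * (hi - lo)"
proof (rule contractions_apply_increment_bound[where V = "\<lambda>\<sigma>. U t (\<sigma> + h)" and y = w
      and y' = "\<lambda>\<sigma>. sC (- \<i>) (G \<sigma> (w \<sigma>))" and d = "\<lambda>\<sigma>. U t (\<sigma> + h) (sC \<i> (H (\<sigma> + h) (w \<sigma>)))",
      OF \<open>lo \<le> hi\<close>])
  fix \<sigma> assume \<sigma>: "\<sigma> \<in> {lo..hi}"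
  note unitary = propagator_unitary[OF P t shift[OF \<sigma>]]
  show "linear (U t (\<sigma> + h))"
    using linear_unitary[OF unitary] .
  show "norm (U t (\<sigma> + h) z) \<le> norm z" for z
    by (simp add: norm_unitary[OF unitary])
  show "(w has_vector_derivative sC (- \<i>) (G \<sigma> (w \<sigma>))) (at \<sigma> within {lo..hi})"
    using w[OF \<sigma>] .
  show "norm (U t (\<sigma> + h) (sC (- \<i>) (G \<sigma> (w \<sigma>))) + U t (\<sigma> + h) (sC \<i> (H (\<sigma> + h) (w \<sigma>)))) \<le> B"
    using bound[OF \<sigma>] by (simp add: norm_unitary_ii_diff[OF unitary])
  have shifted: "(\<lambda>\<sigma>. \<sigma> + h) ` {lo..hi} \<subseteq> I"
    using shift by blast
  then have "continuous_on {lo..hi} (\<lambda>\<sigma>. U t (\<sigma> + h) z)" for z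
    by (intro continuous_on_compose2[OF continuous_on_propagator_right[OF P t]] continuous_intros)
  then show "((\<lambda>\<sigma>'. U t (\<sigma>' + h) z) \<longlongrightarrow> U t (\<sigma> + h) z) (at \<sigma> within {lo..hi})" for z
    using \<sigma> unfolding continuous_on_def by blast
  have "((\<lambda>\<sigma>. \<sigma> + h) has_vector_derivative 1) (at \<sigma> within {lo..hi})"
    by (auto intro!: derivative_eq_intros)
  moreover have "((\<lambda>\<tau>. U t \<tau> (w \<sigma>)) has_vector_derivative U t (\<sigma> + h) (sC \<i> (H (\<sigma> + h) (w \<sigma>))))
      (at (\<sigma> + h) within (\<lambda>\<sigma>. \<sigma> + h) ` {lo..hi})"
    using propagator_has_vector_derivative_initial[OF P t shift[OF \<sigma>] w_in_domain[OF \<sigma>]] shifted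
    by (rule has_vector_derivative_within_subset)
  ultimately show "((\<lambda>\<sigma>'. U t (\<sigma>' + h) (w \<sigma>)) has_vector_derivative U t (\<sigma> + h) (sC \<i> (H (\<sigma> + h) (w \<sigma>))))
      (at \<sigma> within {lo..hi})"
    using vector_diff_chain_within by (fastforce simp: comp_def)
qed

end

section \<open>The state \<open>U\<^sub>1(t, s)\<Psi>\<close> and its speed\<close>

lemma norm_lin_comb_op_diff_le:
  assumes "\<And>i. i \<in> {1..n} \<Longrightarrow> \<bar>g i t - f i t'\<bar> \<le> \<delta>" and "\<And>i. i \<in> {1..n} \<Longrightarrow> norm (Hs i x) \<le> B i"
  shows "norm (lin_comb_op n g Hs t x - lin_comb_op n f Hs t' x) \<le> \<delta> * (\<Sum>i\<in>{1..n}. B i)"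
proof -
  have "norm (lin_comb_op n g Hs t x - lin_comb_op n f Hs t' x) = norm (\<Sum>i\<in>{1..n}. (g i t - f i t') *\<^sub>R Hs i x)"
    unfolding lin_comb_op_def by (simp add: sum_subtractf scaleR_diff_left)
  also have "\<dots> \<le> (\<Sum>i\<in>{1..n}. \<bar>g i t - f i t'\<bar> * norm (Hs i x))"
    by (rule order_trans[OF norm_sum]) simp
  also have "\<dots> \<le> (\<Sum>i\<in>{1..n}. \<delta> * B i)"
    using assms by (intro sum_mono mult_mono) (auto intro: order_trans[OF abs_ge_zero])
  finally show ?thesis
    by (simp add: sum_distrib_left)
qed

lemma shifts_within_interval:
  fixes lo hi s T :: real
  assumes "s \<le> lo" "lo \<le> hi" "hi \<le> T" "hi - lo < T - s"
  obtains S where "0 islimpt S" "\<And>h. h \<in> S \<Longrightarrow> h \<noteq> 0 \<and> s \<le> lo + h \<and> hi + h \<le> T"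
proof (cases "hi < T")
  case True
  show thesis
    by (rule that[of "{0<..<T - hi}"]) (use True assms in \<open>auto intro: islimpt_greaterThanLessThan1\<close>)
next
  case False
  then have "s < lo"
    using assms by linarith
  show thesis
    by (rule that[of "{s - lo<..<0}"]) (use \<open>s < lo\<close> assms in \<open>auto intro: islimpt_greaterThanLessThan2\<close>)
qed

locale schroedinger_solution =
  fixes sC :: "complex \<Rightarrow> 'h::banach \<Rightarrow> 'h" and ci :: "'h \<Rightarrow> 'h \<Rightarrow> complex"
    and D :: "'h set" and n :: nat and Hs :: "nat \<Rightarrow> 'h \<Rightarrow> 'h"
    and I :: "real set" and f :: "nat \<Rightarrow> real \<Rightarrow> real"
    and U :: "real \<Rightarrow> real \<Rightarrow> 'h \<Rightarrow> 'h" and \<Psi> :: 'h and s T :: real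
  assumes hilbert: "complex_hilbert sC ci" and interval: "is_interval I"
    and propagator: "propagator_of sC ci I D (lin_comb_op n f Hs) U"
    and initial_in_domain: "\<Psi> \<in> D" and s_in: "s \<in> I" and T_in: "T \<in> I" and s_less_T: "s < T"
begin

abbreviation H :: "real \<Rightarrow> 'h \<Rightarrow> 'h" where "H \<equiv> lin_comb_op n f Hs"

abbreviation state :: "real \<Rightarrow> 'h" where "state t \<equiv> U t s \<Psi>"

abbreviation speed :: "real \<Rightarrow> real" where "speed t \<equiv> norm (H t (state t))"

lemma Icc_subset_I: "{s..T} \<subseteq> I"
  using mem_is_interval_1_I[OF interval s_in T_in] by auto

lemma norm_state: "t \<in> I \<Longrightarrow> norm (state t) = norm \<Psi>"
  using norm_unitary[OF hilbert propagator_unitary[OF propagator _ s_in]] by blast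

lemma state_in_domain: "t \<in> I \<Longrightarrow> state t \<in> D"
  using propagator_in_domain[OF propagator s_in initial_in_domain] by blast

lemma state_has_vector_derivative:
  "t \<in> {s..T} \<Longrightarrow> (state has_vector_derivative sC (- \<i>) (H t (state t))) (at t within {s..T})"
  using propagator_has_vector_derivative[OF propagator s_in initial_in_domain] Icc_subset_I
  by (meson has_vector_derivative_within_subset subsetD)

lemma norm_state_derivative: "norm (sC (- \<i>) (H t (state t))) = speed t"
  by (simp add: norm_scaleC_unimodular[OF hilbert])

lemma norm_state_quotient_tendsto:
  assumes z: "z \<in> {s..T}" and shifts: "\<And>h. h \<in> S \<Longrightarrow> z + h \<in> {s..T}"
  shows "((\<lambda>h. norm (state (z + h) - state z) / \<bar>h\<bar>) \<longlongrightarrow> speed z) (at 0 within S)"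
proof -
  have "((\<lambda>h. z + h) has_vector_derivative 1) (at 0 within S)"
    by (auto intro!: derivative_eq_intros)
  moreover have "(state has_vector_derivative sC (- \<i>) (H z (state z))) (at z within (\<lambda>h. z + h) ` S)"
    using has_vector_derivative_within_subset[OF state_has_vector_derivative[OF z]] shifts by blast
  ultimately have "((\<lambda>h. state (z + h)) has_vector_derivative sC (- \<i>) (H z (state z))) (at 0 within S)"
    using vector_diff_chain_within[of "\<lambda>h. z + h"] by (fastforce simp: comp_def)
  then have "((\<lambda>h. norm ((state (z + h) - state z) /\<^sub>R h)) \<longlongrightarrow> speed z) (at 0 within S)"
    unfolding has_vector_derivative_iff_tendsto_quotient
    by (auto dest: tendsto_norm simp: norm_state_derivative)
  then show ?thesis
    by (simp add: divide_inverse mult.commute)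
qed

definition lipschitz_points :: "nat \<Rightarrow> real set" where
  "lipschitz_points k = {p \<in> {s..T}. \<forall>\<sigma>\<in>{s..T}. norm (state \<sigma> - state p) \<le> real k * \<bar>\<sigma> - p\<bar>}"

lemma closed_lipschitz_points: "closed (lipschitz_points k)"
proof -
  define excess where "excess \<sigma> p = norm (state \<sigma> - state p) - real k * \<bar>\<sigma> - p\<bar>" for \<sigma> p
  have "continuous_on {s..T} state"
    using continuous_on_subset[OF continuous_on_propagator_left[OF propagator s_in] Icc_subset_I] .
  then have "closed ({s..T} \<inter> excess \<sigma> -` {..0})" for \<sigma>
    unfolding excess_def by (intro continuous_closed_preimage continuous_intros) auto
  moreover have "lipschitz_points k = {s..T} \<inter> (\<Inter>\<sigma>\<in>{s..T}. {s..T} \<inter> excess \<sigma> -` {..0})"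
    unfolding lipschitz_points_def excess_def by auto
  ultimately show ?thesis
    by (metis closed_INT closed_Int closed_atLeastAtMost)
qed

lemma speed_le_at_lipschitz_point:
  assumes "p \<in> lipschitz_points k" shows "speed p \<le> real k"
proof -
  have p: "p \<in> {s..T}"
    using assms unfolding lipschitz_points_def by blast
  have "((\<lambda>h. norm (state (p + h) - state p) / \<bar>h\<bar>) \<longlongrightarrow> speed p) (at 0 within {s - p..T - p})"
    using p by (intro norm_state_quotient_tendsto) auto
  moreover have "eventually (\<lambda>h. norm (state (p + h) - state p) / \<bar>h\<bar> \<le> real k) (at 0 within {s - p..T - p})"
    unfolding eventually_at_filter
  proof (intro always_eventually allI impI)
    fix h assume "h \<noteq> 0" "h \<in> {s - p..T - p}"
    then have "norm (state (p + h) - state p) \<le> real k * \<bar>(p + h) - p\<bar>"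
      using assms unfolding lipschitz_points_def by (auto dest!: bspec[of _ _ "p + h"])
    with \<open>h \<noteq> 0\<close> show "norm (state (p + h) - state p) / \<bar>h\<bar> \<le> real k"
      by (simp add: divide_le_eq)
  qed
  moreover have "\<not> trivial_limit (at 0 within {s - p..T - p})"
    using p s_less_T by (auto simp: trivial_limit_within intro!: islimpt_Icc)
  ultimately show ?thesis
    by (rule tendsto_upperbound)
qed

lemma lipschitz_points_cover: "{s..T} \<subseteq> (\<Union>k. lipschitz_points k)"
proof
  fix p assume p: "p \<in> {s..T}"
  have "((\<lambda>\<sigma>. norm ((state \<sigma> - state p) /\<^sub>R (\<sigma> - p))) \<longlongrightarrow> speed p) (at p within {s..T})"
    using tendsto_norm[OF state_has_vector_derivative[OF p, unfolded has_vector_derivative_iff_tendsto_quotient]]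
    by (simp add: norm_state_derivative)
  then have "eventually (\<lambda>\<sigma>. norm ((state \<sigma> - state p) /\<^sub>R (\<sigma> - p)) < speed p + 1) (at p within {s..T})"
    by (rule order_tendstoD) simp
  then obtain d where "d > 0" and near: "\<And>\<sigma>. \<sigma> \<in> {s..T} \<Longrightarrow> \<sigma> \<noteq> p \<Longrightarrow> dist \<sigma> p < d \<Longrightarrow>
      norm ((state \<sigma> - state p) /\<^sub>R (\<sigma> - p)) < speed p + 1"
    unfolding eventually_at by blast
  define k where "k = nat \<lceil>max (speed p + 1) (2 * norm \<Psi> / d)\<rceil>"
  have k: "speed p + 1 \<le> real k" "2 * norm \<Psi> / d \<le> real k"
    unfolding k_def by (meson max.boundedE real_nat_ceiling_ge)+
  have "norm (state \<sigma> - state p) \<le> real k * \<bar>\<sigma> - p\<bar>" if \<sigma>: "\<sigma> \<in> {s..T}" for \<sigma>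
  proof (cases "dist \<sigma> p < d")
    case True
    show ?thesis
    proof (cases "\<sigma> = p")
      case False
      then have "norm (state \<sigma> - state p) / \<bar>\<sigma> - p\<bar> \<le> real k"
        using near[OF \<sigma> False True] k(1) by (simp add: divide_inverse mult.commute)
      with False show ?thesis
        by (simp add: divide_le_eq)
    qed simp
  next
    case False
    have "norm (state \<sigma> - state p) \<le> norm (state \<sigma>) + norm (state p)"
      by (rule norm_triangle_ineq4)
    also have "\<dots> = (2 * norm \<Psi> / d) * d"
      using norm_state[OF subsetD[OF Icc_subset_I \<sigma>]] norm_state[OF subsetD[OF Icc_subset_I p]] \<open>d > 0\<close> by simp
    also have "\<dots> \<le> real k * \<bar>\<sigma> - p\<bar>"
      using k(2) False \<open>d > 0\<close> by (intro mult_mono) (auto simp: dist_real_def)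
    finally show ?thesis .
  qed
  with p show "p \<in> (\<Union>k. lipschitz_points k)"
    unfolding lipschitz_points_def by blast
qed

end

locale relatively_bounded_solution = schroedinger_solution +
  fixes K :: "nat \<Rightarrow> real"
  assumes K_nonneg: "\<And>i. i \<in> {1..n} \<Longrightarrow> 0 \<le> K i"
    and relative_bound: "\<And>i \<psi> t. i \<in> {1..n} \<Longrightarrow> \<psi> \<in> D \<Longrightarrow> t \<in> I \<Longrightarrow>
      norm (Hs i \<psi>) \<le> K i * (norm (H t \<psi>) + norm \<psi>)"
begin

lemma norm_Hs_state_le:
  assumes "i \<in> {1..n}" "t \<in> I" "speed t \<le> M"
  shows "norm (Hs i (state t)) \<le> K i * (M + norm \<Psi>)"
proof -
  have "norm (Hs i (state t)) \<le> K i * (speed t + norm (state t))"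
    using relative_bound[OF assms(1) state_in_domain[OF assms(2)] assms(2)] .
  also have "\<dots> \<le> K i * (M + norm \<Psi>)"
    using assms K_nonneg[OF assms(1)] norm_state[OF assms(2)] by (intro mult_left_mono) auto
  finally show ?thesis .
qed

lemma norm_propagators_diff_le:
  assumes V: "propagator_of sC ci I D (lin_comb_op n g Hs) V"
    and close: "\<And>i t. i \<in> {1..n} \<Longrightarrow> t \<in> {s..T} \<Longrightarrow> \<bar>g i t - f i t\<bar> \<le> \<delta>"
    and M: "\<And>t. t \<in> {s..T} \<Longrightarrow> speed t \<le> M"
  shows "norm (U T s \<Psi> - V T s \<Psi>) \<le> \<delta> * (\<Sum>i\<in>{1..n}. K i) * (M + norm \<Psi>) * (T - s)"
proof -
  have "norm (V T (T + 0) (state T) - V T (s + 0) (state s)) \<le> \<delta> * (\<Sum>i\<in>{1..n}. K i * (M + norm \<Psi>)) * (T - s)"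
  proof (rule propagator_duhamel_bound[OF hilbert V T_in])
    fix \<sigma> assume \<sigma>: "\<sigma> \<in> {s..T}"
    then have "\<sigma> \<in> I"
      using Icc_subset_I by blast
    then show "\<sigma> + 0 \<in> I" "state \<sigma> \<in> D"
      by (simp_all add: state_in_domain)
    show "(state has_vector_derivative sC (- \<i>) (H \<sigma> (state \<sigma>))) (at \<sigma> within {s..T})"
      using state_has_vector_derivative[OF \<sigma>] .
    show "norm (lin_comb_op n g Hs (\<sigma> + 0) (state \<sigma>) - H \<sigma> (state \<sigma>)) \<le> \<delta> * (\<Sum>i\<in>{1..n}. K i * (M + norm \<Psi>))"
      using close \<sigma> norm_Hs_state_le[OF _ \<open>\<sigma> \<in> I\<close> M[OF \<sigma>]] by (intro norm_lin_comb_op_diff_le) auto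
  qed (use s_less_T in simp)
  then show ?thesis
    using propagator_id[OF V T_in] propagator_id[OF propagator s_in]
    by (simp add: norm_minus_commute sum_distrib_right mult.assoc)
qed

context
  fixes L :: real
  assumes lipschitz: "\<And>i. i \<in> {1..n} \<Longrightarrow> L-lipschitz_on {s..T} (f i)"
begin

lemma increment_constant_nonneg: "0 \<le> L * (\<Sum>i\<in>{1..n}. K i)"
  unfolding sum_distrib_left
  using lipschitz K_nonneg by (intro sum_nonneg mult_nonneg_nonneg) (auto dest: lipschitz_on_nonneg)

text \<open>Shifting both ends of a piece of trajectory by \<open>h\<close> changes the propagator only through
  the coefficients \<open>f\<^sub>i(\<sigma> + h) - f\<^sub>i(\<sigma>) = O(h)\<close>.\<close>
lemma norm_state_shift_increment_le:
  assumes x: "x \<in> {s..T}" and y: "y \<in> {s..T}"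
    and shift: "\<And>\<sigma>. \<sigma> \<in> closed_segment x y \<Longrightarrow> \<sigma> + h \<in> {s..T}"
    and M: "\<And>t. t \<in> closed_segment x y \<Longrightarrow> speed t \<le> M"
  shows "norm (state (x + h) - state x)
    \<le> norm (state (y + h) - state y) + \<bar>h\<bar> * (L * (\<Sum>i\<in>{1..n}. K i) * \<bar>x - y\<bar> * (M + norm \<Psi>))"
proof -
  define B where "B = L * \<bar>h\<bar> * (\<Sum>i\<in>{1..n}. K i * (M + norm \<Psi>))"
  have seg: "closed_segment x y = {min x y..max x y}"
    by (simp add: closed_segment_eq_real_ivl min_def max_def)
  have xh: "x + h \<in> I" and yh: "y + h \<in> I"
    using shift[of x] shift[of y] Icc_subset_I by auto
  have "norm (U (x + h) (max x y + h) (state (max x y)) - U (x + h) (min x y + h) (state (min x y)))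
      \<le> B * (max x y - min x y)"
  proof (rule propagator_duhamel_bound[OF hilbert propagator xh])
    fix \<sigma> assume \<sigma>: "\<sigma> \<in> {min x y..max x y}"
    then have \<sigma>_seg: "\<sigma> \<in> closed_segment x y"
      using seg by simp
    have \<sigma>_in: "\<sigma> \<in> {s..T}"
      using \<sigma> x y by auto
    then have \<sigma>_I: "\<sigma> \<in> I"
      using Icc_subset_I by blast
    show "\<sigma> + h \<in> I" "state \<sigma> \<in> D"
      using subsetD[OF Icc_subset_I shift[OF \<sigma>_seg]] state_in_domain[OF \<sigma>_I] by auto
    show "(state has_vector_derivative sC (- \<i>) (H \<sigma> (state \<sigma>))) (at \<sigma> within {min x y..max x y})"
      by (rule has_vector_derivative_within_subset[OF state_has_vector_derivative[OF \<sigma>_in]]) (use x y in auto)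
    have "\<bar>f i (\<sigma> + h) - f i \<sigma>\<bar> \<le> L * \<bar>h\<bar>" if "i \<in> {1..n}" for i
      using lipschitz_onD[OF lipschitz[OF that] shift[OF \<sigma>_seg] \<sigma>_in] by (simp add: dist_real_def)
    then show "norm (H (\<sigma> + h) (state \<sigma>) - H \<sigma> (state \<sigma>)) \<le> B"
      unfolding B_def using norm_Hs_state_le[OF _ \<sigma>_I M[OF \<sigma>_seg]]
      by (intro norm_lin_comb_op_diff_le) auto
  qed simp
  then have duhamel: "norm (U (x + h) (y + h) (state y) - state x) \<le> B * \<bar>x - y\<bar>"
    using propagator_id[OF propagator xh]
    by (cases "x \<le> y") (auto simp: norm_minus_commute min_def max_def)
  have "state (x + h) - state x = U (x + h) (y + h) (state (y + h) - state y) + (U (x + h) (y + h) (state y) - state x)"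
    using propagator_comp[OF propagator xh yh s_in] linear_diff[OF linear_unitary[OF hilbert propagator_unitary[OF propagator xh yh]]]
    by simp
  also have "norm \<dots> \<le> norm (U (x + h) (y + h) (state (y + h) - state y)) + norm (U (x + h) (y + h) (state y) - state x)"
    by (rule norm_triangle_ineq)
  also have "\<dots> \<le> norm (state (y + h) - state y) + B * \<bar>x - y\<bar>"
    using duhamel by (simp add: norm_unitary[OF hilbert propagator_unitary[OF propagator xh yh]])
  finally show ?thesis
    unfolding B_def sum_distrib_right[symmetric] by (simp add: mult_ac)
qed

lemma speed_increment_le:
  assumes x: "x \<in> {s..T}" and y: "y \<in> {s..T}" and short: "\<bar>x - y\<bar> < T - s"
    and M: "\<And>t. t \<in> closed_segment x y \<Longrightarrow> speed t \<le> M"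
  shows "speed x \<le> speed y + L * (\<Sum>i\<in>{1..n}. K i) * \<bar>x - y\<bar> * (M + norm \<Psi>)"
proof -
  define C where "C = L * (\<Sum>i\<in>{1..n}. K i) * \<bar>x - y\<bar> * (M + norm \<Psi>)"
  have "s \<le> min x y" "min x y \<le> max x y" "max x y \<le> T" "max x y - min x y < T - s"
    using x y short by auto
  then obtain S where "0 islimpt S" and S: "\<And>h. h \<in> S \<Longrightarrow> h \<noteq> 0 \<and> s \<le> min x y + h \<and> max x y + h \<le> T"
    by (rule shifts_within_interval) auto
  have shift: "\<sigma> + h \<in> {s..T}" if "h \<in> S" "\<sigma> \<in> closed_segment x y" for h \<sigma>
    using S[OF that(1)] that(2) by (auto simp: closed_segment_eq_real_ivl split: if_splits)
  have "((\<lambda>h. norm (state (y + h) - state y) / \<bar>h\<bar> + C) \<longlongrightarrow> speed y + C) (at 0 within S)"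
    using shift y by (intro tendsto_add tendsto_const norm_state_quotient_tendsto) auto
  moreover have "((\<lambda>h. norm (state (x + h) - state x) / \<bar>h\<bar>) \<longlongrightarrow> speed x) (at 0 within S)"
    using shift x by (intro norm_state_quotient_tendsto) auto
  moreover have "eventually (\<lambda>h. norm (state (x + h) - state x) / \<bar>h\<bar> \<le> norm (state (y + h) - state y) / \<bar>h\<bar> + C)
      (at 0 within S)"
    unfolding eventually_at_filter
  proof (intro always_eventually allI impI)
    fix h assume "h \<noteq> 0" "h \<in> S"
    then show "norm (state (x + h) - state x) / \<bar>h\<bar> \<le> norm (state (y + h) - state y) / \<bar>h\<bar> + C"
      using norm_state_shift_increment_le[OF x y shift M, of h] unfolding C_def
      by (simp add: field_simps)
  qed
  moreover have "at 0 within S \<noteq> bot"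
    using \<open>0 islimpt S\<close> by (simp add: trivial_limit_within)
  ultimately show ?thesis
    unfolding C_def by (intro tendsto_le) auto
qed

lemma bdd_above_speed: "bdd_above (speed ` {s..T})"
proof -
  interpret increment_controlled speed s T "L * (\<Sum>i\<in>{1..n}. K i)" "norm \<Psi>" "(T - s) / 2"
    using s_less_T increment_constant_nonneg speed_increment_le by unfold_locales auto
  show ?thesis
    using lipschitz_points_cover closed_lipschitz_points speed_le_at_lipschitz_point
    by (rule bdd_above_if_closed_cover)
qed


lemma propagators_close:
  assumes "\<epsilon> > 0"
  obtains \<delta> where "\<delta> > 0"
    and "\<And>g V. propagator_of sC ci I D (lin_comb_op n g Hs) V \<Longrightarrow>
      (\<And>i t. i \<in> {1..n} \<Longrightarrow> t \<in> {s..T} \<Longrightarrow> \<bar>g i t - f i t\<bar> \<le> \<delta>) \<Longrightarrow>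
      norm (U T s \<Psi> - V T s \<Psi>) < \<epsilon>"
proof -
  obtain M where M: "\<And>t. t \<in> {s..T} \<Longrightarrow> speed t \<le> M"
    using bdd_above_speed unfolding bdd_above_def by blast
  define A where "A = (\<Sum>i\<in>{1..n}. K i) * (M + norm \<Psi>) * (T - s)"
  have "speed s \<le> M"
    using M s_less_T by simp
  then have "0 \<le> M"
    by (meson norm_ge_zero order_trans)
  then have "0 \<le> A"
    using K_nonneg s_less_T unfolding A_def by (intro mult_nonneg_nonneg sum_nonneg) auto
  show thesis
  proof (rule that)
    show "0 < \<epsilon> / (A + 1)"
      using \<open>0 \<le> A\<close> assms by simp
    fix g V assume "propagator_of sC ci I D (lin_comb_op n g Hs) V"
      and "\<And>i t. i \<in> {1..n} \<Longrightarrow> t \<in> {s..T} \<Longrightarrow> \<bar>g i t - f i t\<bar> \<le> \<epsilon> / (A + 1)"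
    then have "norm (U T s \<Psi> - V T s \<Psi>) \<le> \<epsilon> / (A + 1) * (\<Sum>i\<in>{1..n}. K i) * (M + norm \<Psi>) * (T - s)"
      using M by (rule norm_propagators_diff_le)
    also have "\<dots> = \<epsilon> / (A + 1) * A"
      unfolding A_def by (simp add: mult.assoc)
    also have "\<dots> < \<epsilon>"
      using \<open>0 \<le> A\<close> assms by (simp add: field_simps)
    finally show "norm (U T s \<Psi> - V T s \<Psi>) < \<epsilon>" .
  qed
qed

end

end

section \<open>Continuous dependence on the coefficients\<close>

lemma C1_on_imp_lipschitz_on:
  assumes "C1_on I g" "{a..b} \<subseteq> I"
  obtains L where "L-lipschitz_on {a..b} g"
proof -
  obtain g' where g': "\<And>t. t \<in> I \<Longrightarrow> (g has_real_derivative g' t) (at t within I)" "continuous_on I g'"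
    using assms(1) unfolding C1_on_def by blast
  have "bounded (g' ` {a..b})"
    using compact_continuous_image[OF continuous_on_subset[OF g'(2) assms(2)] compact_Icc]
    by (rule compact_imp_bounded)
  then obtain B where B: "\<forall>x\<in>{a..b}. \<bar>g' x\<bar> \<le> B"
    unfolding bounded_iff by auto
  have "(g has_derivative (*) (g' t)) (at t within {a..b})" if "t \<in> {a..b}" for t
    using has_derivative_subset[OF has_field_derivative_imp_has_derivative[OF g'(1)] assms(2)] that assms(2)
    by blast
  moreover have "onorm ((*) (g' t)) \<le> max B 0" if "t \<in> {a..b}" for t
  proof (rule onorm_bound)
    have "\<bar>g' t\<bar> \<le> max B 0"
      using B that max.coboundedI1 by blast
    then show "norm (g' t * x) \<le> max B 0 * norm x" for x
      by (simp add: abs_mult mult_right_mono)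
  qed simp
  ultimately have "(max B 0)-lipschitz_on {a..b} g"
    by (intro bounded_derivative_imp_lipschitz) auto
  then show thesis
    by (rule that)
qed

lemma common_lipschitz_constant:
  assumes "finite A" "\<And>i. i \<in> A \<Longrightarrow> \<exists>L. L-lipschitz_on X (f i)"
  obtains L where "\<And>i. i \<in> A \<Longrightarrow> L-lipschitz_on X (f i)"
proof -
  obtain L where L: "\<And>i. i \<in> A \<Longrightarrow> (L i)-lipschitz_on X (f i)"
    using assms(2) by metis
  have "(\<Sum>j\<in>A. L j)-lipschitz_on X (f i)" if "i \<in> A" for i
    using L[OF that] assms(1) that L
    by (elim lipschitz_on_mono) (auto intro: member_le_sum lipschitz_on_nonneg)
  then show thesis
    by (rule that)
qed

lemma abs_le_if_sup_norm_on_less: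
  assumes "sup_norm_on I h < ereal \<delta>" "t \<in> I"
  shows "\<bar>h t\<bar> \<le> \<delta>"
proof -
  have "ereal \<bar>h t\<bar> \<le> sup_norm_on I h"
    unfolding sup_norm_on_def using assms(2) by (rule SUP_upper)
  also have "\<dots> < ereal \<delta>"
    by (rule assms(1))
  finally show ?thesis
    by simp
qed

lemma hyps_i_iii_relative_bound:
  assumes "hyps_i_iii sC ci D I n Hs f"
  obtains K where "\<And>i. i \<in> {1..n} \<Longrightarrow> 0 \<le> K i"
    and "\<And>i \<psi> t. i \<in> {1..n} \<Longrightarrow> \<psi> \<in> D \<Longrightarrow> t \<in> I \<Longrightarrow>
      norm (Hs i \<psi>) \<le> K i * (norm (lin_comb_op n f Hs t \<psi>) + norm \<psi>)"
proof -
  have "\<forall>i\<in>{1..n}. \<exists>K>0. \<forall>\<psi>\<in>D. \<forall>t\<in>I. norm (Hs i \<psi>) \<le> K * (norm (lin_comb_op n f Hs t \<psi>) + norm \<psi>)"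
    using assms unfolding hyps_i_iii_def by blast
  then obtain K where K: "\<forall>i\<in>{1..n}. K i > 0 \<and>
      (\<forall>\<psi>\<in>D. \<forall>t\<in>I. norm (Hs i \<psi>) \<le> K i * (norm (lin_comb_op n f Hs t \<psi>) + norm \<psi>))"
    by (rule bchoice_iff[THEN iffD1, elim_format]) blast
  show thesis
  proof (rule that)
    show "0 \<le> K i" if "i \<in> {1..n}" for i
      using K that by (simp add: less_imp_le)
  qed (use K in blast)
qed

lemma hyps_i_iii_lipschitz:
  assumes "hyps_i_iii sC ci D I n Hs f" "{a..b} \<subseteq> I"
  obtains L where "\<And>i. i \<in> {1..n} \<Longrightarrow> L-lipschitz_on {a..b} (f i)"
proof (rule common_lipschitz_constant)
  show "\<exists>L. L-lipschitz_on {a..b} (f i)" if "i \<in> {1..n}" for i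
    using assms that unfolding hyps_i_iii_def by (meson C1_on_imp_lipschitz_on)
qed auto

theorem theorem2:
  fixes sC :: "complex \<Rightarrow> 'h::banach \<Rightarrow> 'h" and ci :: "'h \<Rightarrow> 'h \<Rightarrow> complex"
    and D :: "'h set" and n :: nat and Hs :: "nat \<Rightarrow> 'h \<Rightarrow> 'h"
    and I :: "real set" and f :: "nat \<Rightarrow> real \<Rightarrow> real"
    and U1 :: "real \<Rightarrow> real \<Rightarrow> 'h \<Rightarrow> 'h"
    and \<Psi> :: 'h and s T \<epsilon> :: real
  assumes "complex_hilbert sC ci"
    and "\<forall>i\<in>{1..n}. symmetric_op sC ci D (Hs i)"
    and "is_interval I"
    and "hyps_i_iii sC ci D I n Hs f"
    and "propagator_of sC ci I D (lin_comb_op n f Hs) U1"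
    and "\<Psi> \<in> D" and "s \<in> I" and "T \<in> I" and "s < T" and "\<epsilon> > 0"
  shows "\<exists>\<delta>>0. \<forall>(g :: nat \<Rightarrow> real \<Rightarrow> real) (U2 :: real \<Rightarrow> real \<Rightarrow> 'h \<Rightarrow> 'h).
           hyps_i_iii sC ci D I n Hs g \<and>
           propagator_of sC ci I D (lin_comb_op n g Hs) U2 \<and>
           (\<forall>i\<in>{1..n}. sup_norm_on I (\<lambda>t. f i t - g i t) < ereal \<delta>)
           \<longrightarrow> norm (U1 T s \<Psi> - U2 T s \<Psi>) < \<epsilon>"
proof -
  obtain K where "\<And>i. i \<in> {1..n} \<Longrightarrow> 0 \<le> K i" "\<And>i \<psi> t. i \<in> {1..n} \<Longrightarrow> \<psi> \<in> D \<Longrightarrow> t \<in> I \<Longrightarrow>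
      norm (Hs i \<psi>) \<le> K i * (norm (lin_comb_op n f Hs t \<psi>) + norm \<psi>)"
    using hyps_i_iii_relative_bound[OF assms(4)] by blast
  then interpret relatively_bounded_solution sC ci D n Hs I f U1 \<Psi> s T K
    using assms by unfold_locales auto
  obtain L where L: "\<And>i. i \<in> {1..n} \<Longrightarrow> L-lipschitz_on {s..T} (f i)"
    using hyps_i_iii_lipschitz[OF assms(4) Icc_subset_I] by blast
  show ?thesis
  proof (rule propagators_close[OF L assms(10)])
    fix \<delta> assume "\<delta> > 0" and close: "\<And>g V. propagator_of sC ci I D (lin_comb_op n g Hs) V \<Longrightarrow>
      (\<And>i t. i \<in> {1..n} \<Longrightarrow> t \<in> {s..T} \<Longrightarrow> \<bar>g i t - f i t\<bar> \<le> \<delta>) \<Longrightarrow> norm (U1 T s \<Psi> - V T s \<Psi>) < \<epsilon>"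
    show ?thesis
    proof (intro exI[of _ \<delta>] conjI allI impI \<open>\<delta> > 0\<close>; elim conjE)
      fix g :: "nat \<Rightarrow> real \<Rightarrow> real" and U2 :: "real \<Rightarrow> real \<Rightarrow> 'h \<Rightarrow> 'h"
      assume V: "propagator_of sC ci I D (lin_comb_op n g Hs) U2"
        and sup: "\<forall>i\<in>{1..n}. sup_norm_on I (\<lambda>t. f i t - g i t) < ereal \<delta>"
      have "\<bar>g i t - f i t\<bar> \<le> \<delta>" if "i \<in> {1..n}" "t \<in> {s..T}" for i t
        using abs_le_if_sup_norm_on_less[OF bspec[OF sup that(1)] subsetD[OF Icc_subset_I that(2)]]
        by (simp add: abs_minus_commute)
      then show "norm (U1 T s \<Psi> - U2 T s \<Psi>) < \<epsilon>"
        by (rule close[OF V])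
    qed
  qed
qed

end
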